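(* Fix $\beta\in[0,2]$ and let $M_0,M_1,M_2,\dots\in\mathfrak M^\beta$, with $\beta$-inversions $M_n^\beta$. 1. $M_n\to M_0$ on $\mathbb R^d_0$ if and only if $M_n^\beta\to M_0^\beta$ on $\mathbb R^d_0$. 2. $\lim_{\epsilon\downarrow0}\limsup_{n\to\infty}\int_{|x|<\epsilon}|x|^2M_n(dx)=0$ if and only if $\lim_{N\to\infty}\limsup_{n\to\infty}\int_{|x|>N}|x|^\beta M_n^\beta(dx)=0$.
   Context: For $\beta\in[0,2]$, $\mathfrak M^\beta$ is the class of Borel measures $M$ on $\mathbb R^d$ with $M(\{0\})=0$ and $\int_{\mathbb R^d}(|x|^2\wedge|x|^\beta)M(dx)<\infty$. For $M\in\mathfrak M^\beta$, the $\beta$-inversion $M^\beta$ is the measure with $M^\beta(\{0\})=0$ and $M^\beta(A)=\int_{\mathbb R^d}1_A(x/|x|^2)|x|^{2+\beta}M(dx)$ for Borel $A$. $\mathbb R^d_0=\mathbb R^d\setminus\{0\}$, and $M_n\to M_0$ on $\mathbb R^d_0$ means $\int f\,dM_n\to\int f\,dM_0$ for every bounded continuous $f:\mathbb R^d\to\mathbb R$ vanishing on a neighborhood of $0$ and on a neighborhood of infinity. *)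

theory Defs
  imports "HOL-Analysis.Analysis" "HOL-Probability.Probability"
begin

definition frakM :: "real \<Rightarrow> 'a::euclidean_space measure set" where
  "frakM b = {M. sets M = sets borel \<and> emeasure M {0} = 0 \<and>
      (\<integral>\<^sup>+ x. ennreal (min ((norm x)\<^sup>2) (norm x powr b)) \<partial>M) < \<infinity>}"

text \<open>The \<open>\<beta>\<close>-inversion: \<open>M^\<beta>(A) = \<integral> 1_A(x/|x|^2) |x|^(2+\<beta>) M(dx)\<close>
  (the point 0 gets weight 0, so \<open>M^\<beta>{0} = 0\<close>).\<close>
definition beta_inversion :: "real \<Rightarrow> 'a::euclidean_space measure \<Rightarrow> 'a measure" where
  "beta_inversion b M =
     distr (density M (\<lambda>x. ennreal (norm x powr (2 + b)))) borel (\<lambda>x. x /\<^sub>R (norm x)\<^sup>2)"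

definition test_fun0 :: "('a::euclidean_space \<Rightarrow> real) \<Rightarrow> bool" where
  "test_fun0 f \<longleftrightarrow> continuous_on UNIV f \<and> bounded (range f) \<and>
     (\<exists>e>0. \<forall>x. norm x < e \<longrightarrow> f x = 0) \<and>
     (\<exists>N. \<forall>x. norm x > N \<longrightarrow> f x = 0)"

definition conv_R0 :: "(nat \<Rightarrow> 'a::euclidean_space measure) \<Rightarrow> 'a measure \<Rightarrow> bool" where
  "conv_R0 Ms M0 \<longleftrightarrow> (\<forall>f. test_fun0 f \<longrightarrow>
      (\<lambda>n. integral\<^sup>L (Ms n) f) \<longlonglongrightarrow> integral\<^sup>L M0 f)"

end

theory Submission
  imports Defs
begin

text \<open>The inversion \<open>x \<mapsto> x/|x|^2\<close> in the unit sphere is an involution of \<open>\<real>^d_0\<close> that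
  swaps neighbourhoods of \<open>0\<close> with neighbourhoods of infinity, and \<open>M^\<beta>\<close> is the image of
  \<open>|x|^(2+\<beta>) M(dx)\<close> under it. Hence \<open>\<integral> f dM^\<beta> = \<integral> g dM\<close> with
  \<open>g(x) = |x|^(2+\<beta>) f(x/|x|^2)\<close>, and \<open>f \<mapsto> g\<close> is a bijection of the test functions; this
  transfers vague convergence on \<open>\<real>^d_0\<close> in both directions. For \<open>f = 1_{|x|>N} |x|^\<beta>\<close>
  one gets \<open>g = 1_{|x|<1/N} |x|^2\<close>, so the two tail conditions correspond under \<open>N = 1/\<epsilon>\<close>.\<close>

definition sphere_inversion :: "'a::real_normed_vector \<Rightarrow> 'a" where
  "sphere_inversion x = x /\<^sub>R (norm x)\<^sup>2"

lemma sphere_inversion_0 [simp]: "sphere_inversion 0 = 0"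
  by (simp add: sphere_inversion_def)

lemma norm_sphere_inversion [simp]: "norm (sphere_inversion x) = inverse (norm x)"
  by (cases "x = 0") (simp_all add: sphere_inversion_def power2_eq_square field_simps)

lemma sphere_inversion_sphere_inversion [simp]: "sphere_inversion (sphere_inversion x) = x"
  by (cases "x = 0") (simp_all add: sphere_inversion_def power2_eq_square field_simps)

lemma borel_measurable_sphere_inversion [measurable]:
  "sphere_inversion \<in> borel_measurable (borel :: 'a::euclidean_space measure)"
  unfolding sphere_inversion_def by measurable

lemma continuous_on_sphere_inversion: "continuous_on (-{0}) sphere_inversion"
  unfolding sphere_inversion_def by (intro continuous_intros) auto

definition inversion_dual :: "real \<Rightarrow> ('a::real_normed_vector \<Rightarrow> real) \<Rightarrow> 'a \<Rightarrow> real" where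
  "inversion_dual b f x = norm x powr (2 + b) * f (sphere_inversion x)"

lemma borel_measurable_inversion_dual:
  fixes f :: "'a::euclidean_space \<Rightarrow> real"
  assumes [measurable]: "f \<in> borel_measurable borel"
  shows "inversion_dual b f \<in> borel_measurable borel"
  unfolding inversion_dual_def by measurable

lemma inversion_dual_inversion_dual:
  assumes "f 0 = 0"
  shows "inversion_dual b (inversion_dual b f) = f"
proof
  fix x :: 'a
  show "inversion_dual b (inversion_dual b f) x = f x"
  proof (cases "x = 0")
    case False
    then have "norm x powr (2 + b) * inverse (norm x) powr (2 + b) = 1"
      by (simp add: powr_mult[symmetric])
    then show ?thesis
      unfolding inversion_dual_def by (simp add: mult.assoc[symmetric])
  qed (simp add: inversion_dual_def assms)
qed

lemma continuous_on_UNIV_if_locally_constant_at_0: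
  fixes g :: "'a::real_normed_vector \<Rightarrow> 'b::topological_space"
  assumes "continuous_on (-{0}) g" "r > 0" "\<And>x. norm x < r \<Longrightarrow> g x = c"
  shows "continuous_on UNIV g"
proof -
  have "continuous_on (ball 0 r) g"
    using assms(3) by (intro continuous_on_eq[OF continuous_on_const[of _ c]]) auto
  then have "continuous_on (ball 0 r \<union> -{0}) g"
    using assms(1) by (intro continuous_on_open_Un) auto
  moreover have "ball 0 r \<union> -{0} = UNIV"
    using assms(2) by auto
  ultimately show ?thesis
    by metis
qed

lemma bounded_range_if_vanishing_outside_cball:
  fixes g :: "'a::{heine_borel,real_normed_vector} \<Rightarrow> 'b::real_normed_vector"
  assumes "continuous_on UNIV g" "\<And>x. norm x > R \<Longrightarrow> g x = 0"
  shows "bounded (range g)"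
proof -
  have "range g \<subseteq> insert 0 (g ` cball 0 R)"
    using assms(2) by (force simp: not_less)
  moreover have "bounded (g ` cball 0 R)"
    by (intro compact_imp_bounded compact_continuous_image
        continuous_on_subset[OF assms(1)]) auto
  ultimately show ?thesis
    by (meson bounded_insert bounded_subset)
qed

lemma test_fun0_inversion_dual:
  fixes f :: "'a::euclidean_space \<Rightarrow> real"
  assumes "test_fun0 f"
  shows "test_fun0 (inversion_dual b f)"
proof -
  obtain e N where e: "e > 0" "\<And>x. norm x < e \<Longrightarrow> f x = 0"
    and N: "\<And>x. norm x > N \<Longrightarrow> f x = 0" and f: "continuous_on UNIV f"
    using assms unfolding test_fun0_def by blast
  define N' where "N' = max N 1"
  have "N' > 0" "N' \<ge> N"
    unfolding N'_def by auto
  have near_0: "inversion_dual b f x = 0" if "norm x < inverse N'" for x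
  proof (cases "x = 0")
    case False
    then have "inverse (norm x) > N'"
      using that \<open>N' > 0\<close> by (simp add: field_simps)
    then show ?thesis
      using N \<open>N' \<ge> N\<close> by (simp add: inversion_dual_def)
  qed (simp add: inversion_dual_def)
  have near_infinity: "inversion_dual b f x = 0" if "norm x > inverse e" for x
  proof -
    have "x \<noteq> 0" "norm x > 0"
      using that e(1) by (auto simp: less_le_not_le)
    then have "inverse (norm x) < e"
      using that e(1) by (simp add: field_simps)
    then show ?thesis
      using e(2) by (simp add: inversion_dual_def)
  qed
  have "continuous_on (-{0}) (inversion_dual b f)"
    unfolding inversion_dual_def
    by (intro continuous_intros continuous_on_compose2[OF f continuous_on_sphere_inversion]) auto
  then have cont: "continuous_on UNIV (inversion_dual b f)"
    using continuous_on_UNIV_if_locally_constant_at_0[of "inversion_dual b f" "inverse N'" 0]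
      near_0 \<open>N' > 0\<close> by simp
  show ?thesis
    unfolding test_fun0_def
    using cont bounded_range_if_vanishing_outside_cball[OF cont near_infinity]
      near_0 near_infinity \<open>N' > 0\<close> by (metis positive_imp_inverse_positive)
qed

lemma test_fun0_borel_measurable: "test_fun0 f \<Longrightarrow> f \<in> borel_measurable borel"
  unfolding test_fun0_def by (auto intro: borel_measurable_continuous_onI)

lemma beta_inversion_eq_distr:
  "beta_inversion b M =
     distr (density M (\<lambda>x. ennreal (norm x powr (2 + b)))) borel sphere_inversion"
  unfolding beta_inversion_def sphere_inversion_def ..

lemma measurable_comp_sphere_inversion:
  fixes M :: "'a::euclidean_space measure"
  assumes "sets M = sets borel" "f \<in> borel_measurable borel"
  shows "(\<lambda>x. f (sphere_inversion x)) \<in> borel_measurable M"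
  using measurable_compose[OF borel_measurable_sphere_inversion assms(2)] assms(1)
  by (simp cong: measurable_cong_sets)

lemma measurable_density_sphere_inversion:
  fixes M :: "'a::euclidean_space measure"
  assumes "sets M = sets borel"
  shows "sphere_inversion \<in> measurable (density M g) borel"
  using assms by (simp add: borel_measurable_sphere_inversion cong: measurable_cong_sets)

lemma nn_integral_beta_inversion:
  fixes f :: "'a::euclidean_space \<Rightarrow> ennreal"
  assumes M: "sets M = sets borel" and f: "f \<in> borel_measurable borel"
  shows "(\<integral>\<^sup>+ x. f x \<partial>beta_inversion b M)
       = (\<integral>\<^sup>+ x. ennreal (norm x powr (2 + b)) * f (sphere_inversion x) \<partial>M)"
proof -
  have "(\<lambda>x. f (sphere_inversion x)) \<in> borel_measurable M"
    using M f by (rule measurable_comp_sphere_inversion)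
  then show ?thesis
    unfolding beta_inversion_eq_distr
    using M f by (simp add: nn_integral_distr measurable_density_sphere_inversion
        nn_integral_density cong: measurable_cong_sets)
qed

lemma integral_beta_inversion:
  fixes f :: "'a::euclidean_space \<Rightarrow> real"
  assumes M: "sets M = sets borel" and f: "f \<in> borel_measurable borel"
  shows "integral\<^sup>L (beta_inversion b M) f = integral\<^sup>L M (inversion_dual b f)"
proof -
  have "(\<lambda>x. f (sphere_inversion x)) \<in> borel_measurable M"
    using M f by (rule measurable_comp_sphere_inversion)
  then show ?thesis
    unfolding beta_inversion_eq_distr inversion_dual_def
    using M f by (simp add: integral_distr measurable_density_sphere_inversion
        integral_density cong: measurable_cong_sets)
qed

lemma nn_integral_beta_inversion_tail:
  fixes M :: "'a::euclidean_space measure"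
  assumes M: "sets M = sets borel" and "N > 0"
  shows "(\<integral>\<^sup>+ x. indicator {x. norm x > N} x * ennreal (norm x powr b) \<partial>beta_inversion b M)
       = (\<integral>\<^sup>+ x. indicator {x. norm x < inverse N} x * ennreal ((norm x)\<^sup>2) \<partial>M)"
proof -
  have weight: "norm x powr (2 + b) * inverse (norm x) powr b = (norm x)\<^sup>2" if "x \<noteq> 0" for x :: 'a
    using that by (simp add: powr_add powr_mult[symmetric] powr_numeral mult.assoc)
  have "ennreal (norm x powr (2 + b)) *
          (indicator {x. norm x > N} (sphere_inversion x) * ennreal (norm (sphere_inversion x) powr b))
      = indicator {x. norm x < inverse N} x * ennreal ((norm x)\<^sup>2)" for x :: 'a
  proof (cases "x = 0")
    case False
    then have "N < inverse (norm x) \<longleftrightarrow> norm x < inverse N"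
      using \<open>N > 0\<close> by (simp add: field_simps)
    then show ?thesis
      using weight[OF False] by (simp add: indicator_def ennreal_mult[symmetric])
  qed (use \<open>N > 0\<close> in simp)
  then show ?thesis
    by (simp add: nn_integral_beta_inversion[OF M])
qed

lemma integral_eq_integral_beta_inversion_dual:
  fixes M :: "'a::euclidean_space measure"
  assumes "sets M = sets borel" "test_fun0 f"
  shows "integral\<^sup>L M f = integral\<^sup>L (beta_inversion b M) (inversion_dual b f)"
proof -
  have "f 0 = 0"
    using assms(2) unfolding test_fun0_def by force
  then show ?thesis
    using integral_beta_inversion[OF assms(1) borel_measurable_inversion_dual]
      test_fun0_borel_measurable[OF assms(2)] inversion_dual_inversion_dual by metis
qed

lemma conv_R0_beta_inversion_iff:
  fixes Ms :: "nat \<Rightarrow> 'a::euclidean_space measure"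
  assumes "\<And>n. sets (Ms n) = sets borel" "sets M0 = sets borel"
  shows "conv_R0 (\<lambda>n. beta_inversion b (Ms n)) (beta_inversion b M0) \<longleftrightarrow> conv_R0 Ms M0"
  unfolding conv_R0_def
proof safe
  fix f :: "'a \<Rightarrow> real"
  assume "test_fun0 f"
  then have dual: "test_fun0 (inversion_dual b f)"
    by (rule test_fun0_inversion_dual)
  {
    assume "\<forall>g. test_fun0 g \<longrightarrow>
      (\<lambda>n. integral\<^sup>L (beta_inversion b (Ms n)) g) \<longlonglongrightarrow> integral\<^sup>L (beta_inversion b M0) g"
    with dual show "(\<lambda>n. integral\<^sup>L (Ms n) f) \<longlonglongrightarrow> integral\<^sup>L M0 f"
      by (simp add: integral_eq_integral_beta_inversion_dual[OF _ \<open>test_fun0 f\<close>, where b=b]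
          assms)
  next
    assume "\<forall>g. test_fun0 g \<longrightarrow> (\<lambda>n. integral\<^sup>L (Ms n) g) \<longlonglongrightarrow> integral\<^sup>L M0 g"
    with dual show "(\<lambda>n. integral\<^sup>L (beta_inversion b (Ms n)) f) \<longlonglongrightarrow> integral\<^sup>L (beta_inversion b M0) f"
      by (simp add: integral_beta_inversion assms test_fun0_borel_measurable \<open>test_fun0 f\<close>)
  }
qed

theorem proposition1:
  fixes b :: real and M :: "nat \<Rightarrow> 'a::euclidean_space measure"
  assumes "0 \<le> b" "b \<le> 2"
    and "\<And>n. M n \<in> frakM b"
  shows "(conv_R0 (\<lambda>n. M (Suc n)) (M 0) \<longleftrightarrow>
           conv_R0 (\<lambda>n. beta_inversion b (M (Suc n))) (beta_inversion b (M 0)))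
       \<and> (((\<lambda>\<epsilon>. limsup (\<lambda>n. \<integral>\<^sup>+ x. indicator {x. norm x < \<epsilon>} x * ennreal ((norm x)\<^sup>2) \<partial>(M n)))
            \<longlongrightarrow> 0) (at_right 0)
         \<longleftrightarrow>
         ((\<lambda>N::real. limsup (\<lambda>n. \<integral>\<^sup>+ x. indicator {x. norm x > N} x * ennreal (norm x powr b)
                                  \<partial>(beta_inversion b (M n))))
            \<longlongrightarrow> 0) at_top)"
    (is "?vague \<and> ((?small \<longlongrightarrow> 0) _ \<longleftrightarrow> (?tail \<longlongrightarrow> 0) _)")
proof -
  have sets_M: "sets (M n) = sets borel" for n
    using assms(3) unfolding frakM_def by blast
  have tail_eq: "?tail N = ?small (inverse N)" if "N > 0" for N
    using nn_integral_beta_inversion_tail[OF sets_M that] by simp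
  have "\<forall>\<^sub>F N in at_top. ?small (inverse N) = ?tail N"
    using eventually_gt_at_top[of "0::real"] by eventually_elim (simp add: tail_eq)
  then have "(?small \<longlongrightarrow> 0) (at_right 0) \<longleftrightarrow> (?tail \<longlongrightarrow> 0) at_top"
    unfolding filterlim_at_right_to_top by (rule tendsto_cong)
  moreover have ?vague
    using conv_R0_beta_inversion_iff[of "\<lambda>n. M (Suc n)" "M 0" b] sets_M by simp
  ultimately show ?thesis by blast
qed

end
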